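(* Let $\mathcal{X}\subset\mathbb{R}^d$ and let $X=(X_n)_{n\ge0}$ be the Markov chain on $\mathcal{X}$ given by $X_{n+1}=f_{n+1}(X_n)$, $n=0,1,2,\dots$, where $f_1,f_2,\dots$ are iid copies of a random mapping $f:\mathcal{X}\to\mathcal{X}$ which is almost surely locally Lipschitz. Fix a function $U:\mathcal{X}\to\mathbb{R}_+$ with $\inf_{\mathcal{X}} U>0$, and suppose that the inequality $KW\le W-U$ (pointwise on $\mathcal{X}$) has a non-negative finite solution $W_*$. Define $$V_*(x)=\mathbb{E}_x\Big[\sum_{k=0}^\infty U(X_k)\prod_{l=1}^{k}Df_l(X_{l-1})\Big],\qquad x\in\mathcal{X}.$$ Then $V_*$ is finite and satisfies $KV_*=V_*-U$ on $\mathcal{X}$. Furthermore, the equation $KV=V-U$ has at most one bounded solution.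
   Context: $\|\cdot\|$ is the Euclidean norm and $B_\delta(x)=\{x':\|x'-x\|<\delta\}$. For a locally Lipschitz map $g$, its local Lipschitz constant at $x$ is $Dg(x)=\lim_{\delta\to0}\sup_{x',x''\in B_\delta(x)}\frac{\|g(x')-g(x'')\|}{\|x'-x''\|}$. For a function $V:\mathcal{X}\to\mathbb{R}_+$, the operator $K$ is defined by $KV(x)=\mathbb{E}\,[Df(x)\,V(f(x))]$. $\mathbb{E}_x$ denotes expectation conditional on $X_0=x$, and the empty product (for $k=0$) equals $1$. Functions $V$ considered as solutions of $KV=V-U$ are non-negative functions on $\mathcal{X}$. *)

theory Defs
  imports "HOL-Probability.Probability"
begin

text \<open>Values in ennreal; the supremum of the (non-negative) ratios is taken with 0 added,
  so that an empty index set gives 0.\<close>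
definition lipc :: "('a::real_normed_vector \<Rightarrow> 'b::real_normed_vector) \<Rightarrow> 'a set \<Rightarrow> 'a \<Rightarrow> ennreal" where
  "lipc g S x = Lim (at_right (0::real))
     (\<lambda>\<delta>. Sup (insert 0 {ennreal (norm (g x' - g x'') / norm (x' - x'')) | x' x''.
                 x' \<in> ball x \<delta> \<inter> S \<and> x'' \<in> ball x \<delta> \<inter> S \<and> x' \<noteq> x''}))"

definition loc_lipschitz_on :: "'a::real_normed_vector set \<Rightarrow> ('a \<Rightarrow> 'b::real_normed_vector) \<Rightarrow> bool" where
  "loc_lipschitz_on S g \<longleftrightarrow> (\<forall>x\<in>S. \<exists>\<delta>>0. \<exists>L. \<forall>x'\<in>ball x \<delta> \<inter> S. \<forall>x''\<in>ball x \<delta> \<inter> S.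
      norm (g x' - g x'') \<le> L * norm (x' - x''))"

definition Kop :: "'w measure \<Rightarrow> ('w \<Rightarrow> 'a::real_normed_vector \<Rightarrow> 'a) \<Rightarrow> 'a set
     \<Rightarrow> ('a \<Rightarrow> ennreal) \<Rightarrow> 'a \<Rightarrow> ennreal" where
  "Kop \<mu> f S V x = (\<integral>\<^sup>+ w. lipc (f w) S x * V (f w x) \<partial>\<mu>)"

primrec chain :: "('w \<Rightarrow> 'a \<Rightarrow> 'a) \<Rightarrow> (nat \<Rightarrow> 'w) \<Rightarrow> 'a \<Rightarrow> nat \<Rightarrow> 'a" where
  "chain f \<omega> x 0 = x"
| "chain f \<omega> x (Suc n) = f (\<omega> n) (chain f \<omega> x n)"

text \<open>V_*(x) = E_x [ sum_k U(X_k) prod_{l=1}^k Df_l(X_{l-1}) ], with f_l = f (omega (l-1)),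
  omega distributed according to the infinite product of mu (iid copies).\<close>
definition Vstar :: "'w measure \<Rightarrow> ('w \<Rightarrow> 'a::real_normed_vector \<Rightarrow> 'a) \<Rightarrow> 'a set
     \<Rightarrow> ('a \<Rightarrow> real) \<Rightarrow> 'a \<Rightarrow> ennreal" where
  "Vstar \<mu> f S U x = (\<integral>\<^sup>+ \<omega>. (\<Sum>k. ennreal (U (chain f \<omega> x k)) *
        (\<Prod>l\<in>{1..k}. lipc (f (\<omega> (l - 1))) S (chain f \<omega> x (l - 1))))
     \<partial>(PiM (UNIV :: nat set) (\<lambda>_. \<mu>)))"

end

theory Submission
  imports Defs
begin

text \<open>Splitting off the first step of the chain shows that \<open>V\<^sub>*\<close> is a fixed point of
  \<open>V \<mapsto> U + K V\<close>; the iterates of this map started at \<open>0\<close> are the expected partial sums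
  of \<open>V\<^sub>*\<close>, and they stay below any supersolution \<open>W\<close>, so \<open>V\<^sub>* \<le> W < \<infinity>\<close>.
  For uniqueness, the difference \<open>D = \<bar>V\<^sub>1 - V\<^sub>2\<bar>\<close> of two bounded solutions satisfies
  \<open>D \<le> K D\<close>. If \<open>D \<le> B\<close> and \<open>D \<le> s W\<close>, then \<open>D \<le> s K W \<le> s (W - U) \<le> s (W - c)\<close>
  with \<open>c = inf U\<close>, and the two bounds combine to \<open>D \<le> s B / (B + s c) W\<close>, which for
  \<open>s = B / (c m)\<close> is \<open>B / (c (m + 1)) W\<close>. Starting from \<open>s = B / c\<close> this gives
  \<open>D \<le> B W / (c (n + 1))\<close> for every \<open>n\<close>, hence \<open>D = 0\<close>.\<close>

lemma le_harmonic_step: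
  fixes B c d m w :: real
  assumes "0 < c" "0 < m" "d \<le> B" "d \<le> B / (c * m) * (w - c)"
  shows "d \<le> B / (c * (m + 1)) * w"
proof -
  have "d * (c * m) \<le> B * (w - c)"
    using assms(1,2,4) by (simp add: field_simps)
  moreover have "d * c \<le> B * c"
    using assms(1,3) by simp
  ultimately have "d * (c * (m + 1)) \<le> B * w"
    by (simp add: algebra_simps)
  moreover have "0 < c * (m + 1)"
    using assms(1,2) by simp
  ultimately show ?thesis
    by (simp only: times_divide_eq_left pos_le_divide_eq)
qed

lemma
  fixes M :: "'a measure"
  assumes "prob_space M" and g: "g \<in> borel_measurable (PiM UNIV (\<lambda>_::nat. M))"
  shows nn_integral_PiM_case_nat:
      "(\<integral>\<^sup>+\<omega>. g \<omega> \<partial>PiM UNIV (\<lambda>_. M))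
         = (\<integral>\<^sup>+s. (\<integral>\<^sup>+\<omega>. g (case_nat s \<omega>) \<partial>PiM UNIV (\<lambda>_. M)) \<partial>M)"
    and borel_measurable_nn_integral_PiM_case_nat:
      "(\<lambda>s. \<integral>\<^sup>+\<omega>. g (case_nat s \<omega>) \<partial>PiM UNIV (\<lambda>_. M)) \<in> borel_measurable M"
proof -
  interpret M: prob_space M by fact
  interpret S: sequence_space M by unfold_locales
  interpret P: pair_sigma_finite M S.S ..
  have m: "(\<lambda>(s, \<omega>). g (case_nat s \<omega>)) \<in> borel_measurable (M \<Otimes>\<^sub>M S.S)"
    using g by measurable
  have "(\<integral>\<^sup>+\<omega>. g \<omega> \<partial>S.S) = (\<integral>\<^sup>+p. g ((\<lambda>(s, \<omega>). case_nat s \<omega>) p) \<partial>(M \<Otimes>\<^sub>M S.S))"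
    by (subst S.PiM_iter[symmetric]) (simp add: nn_integral_distr g)
  also have "\<dots> = (\<integral>\<^sup>+s. \<integral>\<^sup>+\<omega>. g ((\<lambda>(s, \<omega>). case_nat s \<omega>) (s, \<omega>)) \<partial>S.S \<partial>M)"
    using m by (subst S.nn_integral_fst) (simp_all add: case_prod_beta')
  finally show "(\<integral>\<^sup>+\<omega>. g \<omega> \<partial>PiM UNIV (\<lambda>_. M))
      = (\<integral>\<^sup>+s. (\<integral>\<^sup>+\<omega>. g (case_nat s \<omega>) \<partial>PiM UNIV (\<lambda>_. M)) \<partial>M)"
    by simp
  show "(\<lambda>s. \<integral>\<^sup>+\<omega>. g (case_nat s \<omega>) \<partial>PiM UNIV (\<lambda>_. M)) \<in> borel_measurable M"
    using S.borel_measurable_nn_integral_fst[OF m] by simp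
qed

locale iterated_random_map =
  fixes \<mu> :: "'w measure" and f :: "'w \<Rightarrow> 'a::euclidean_space \<Rightarrow> 'a"
    and X :: "'a set" and U :: "'a \<Rightarrow> real"
  assumes prob: "prob_space \<mu>"
    and maps_into: "\<And>w x. x \<in> X \<Longrightarrow> f w x \<in> X"
    and f_meas: "(\<lambda>(w, x). f w x) \<in> measurable (\<mu> \<Otimes>\<^sub>M restrict_space borel X) (restrict_space borel X)"
    and Df_meas: "(\<lambda>(w, x). lipc (f w) X x) \<in> borel_measurable (\<mu> \<Otimes>\<^sub>M restrict_space borel X)"
    and U_meas: "U \<in> borel_measurable (restrict_space borel X)"
begin

abbreviation "paths \<equiv> PiM (UNIV::nat set) (\<lambda>_. \<mu>)"
abbreviation "MX \<equiv> restrict_space borel X"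

definition lip_prod :: "'a \<Rightarrow> (nat \<Rightarrow> 'w) \<Rightarrow> nat \<Rightarrow> ennreal" where
  "lip_prod x \<omega> k = (\<Prod>j<k. lipc (f (\<omega> j)) X (chain f \<omega> x j))"

definition weighted_cost :: "'a \<Rightarrow> (nat \<Rightarrow> 'w) \<Rightarrow> nat \<Rightarrow> ennreal" where
  "weighted_cost x \<omega> k = ennreal (U (chain f \<omega> x k)) * lip_prod x \<omega> k"

definition total_cost :: "'a \<Rightarrow> (nat \<Rightarrow> 'w) \<Rightarrow> ennreal" where
  "total_cost x \<omega> = (\<Sum>k. weighted_cost x \<omega> k)"

lemma prob_space_paths: "prob_space paths"
  by (rule prob_space_PiM) (simp add: prob)

lemma measurable_chain[measurable]: "x \<in> X \<Longrightarrow> (\<lambda>\<omega>. chain f \<omega> x k) \<in> measurable paths MX"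
proof (induction k)
  case 0
  then show ?case by (simp add: space_restrict_space)
next
  case (Suc k)
  have "(\<lambda>\<omega>. (\<lambda>(w, y). f w y) (\<omega> k, chain f \<omega> x k)) \<in> measurable paths MX"
    by (rule measurable_compose[OF _ f_meas], rule measurable_Pair)
       (auto intro: measurable_component_singleton Suc)
  then show ?case by simp
qed

lemma borel_measurable_lipc_chain[measurable]:
  "x \<in> X \<Longrightarrow> (\<lambda>\<omega>. lipc (f (\<omega> k)) X (chain f \<omega> x k)) \<in> borel_measurable paths"
  using measurable_compose[OF measurable_Pair[OF measurable_component_singleton measurable_chain] Df_meas]
  by simp

lemma borel_measurable_U_chain[measurable]:
  "x \<in> X \<Longrightarrow> (\<lambda>\<omega>. U (chain f \<omega> x k)) \<in> borel_measurable paths"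
  by (rule measurable_compose[OF measurable_chain U_meas])

lemma borel_measurable_weighted_cost[measurable]:
  "x \<in> X \<Longrightarrow> (\<lambda>\<omega>. weighted_cost x \<omega> k) \<in> borel_measurable paths"
  unfolding weighted_cost_def lip_prod_def by measurable

lemma borel_measurable_partial_cost:
  "x \<in> X \<Longrightarrow> (\<lambda>\<omega>. \<Sum>k<n. weighted_cost x \<omega> k) \<in> borel_measurable paths"
  by measurable

lemma borel_measurable_total_cost[measurable]: "x \<in> X \<Longrightarrow> total_cost x \<in> borel_measurable paths"
  unfolding total_cost_def by measurable

lemma borel_measurable_Kop_integrand:
  assumes "x \<in> X" "V \<in> borel_measurable MX"
  shows "(\<lambda>w. lipc (f w) X x * V (f w x)) \<in> borel_measurable \<mu>"
proof -
  have "(\<lambda>w. f w x) \<in> measurable \<mu> MX"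
    using measurable_compose[OF measurable_Pair2'[of x MX \<mu>] f_meas] assms(1)
    by (simp add: space_restrict_space)
  moreover have "(\<lambda>w. lipc (f w) X x) \<in> borel_measurable \<mu>"
    using measurable_compose[OF measurable_Pair2'[of x MX \<mu>] Df_meas] assms(1)
    by (simp add: space_restrict_space)
  ultimately show ?thesis
    using assms(2) by measurable
qed

lemma chain_case_nat: "chain f (case_nat w \<omega>) x (Suc k) = chain f \<omega> (f w x) k"
  by (induction k) auto

lemma weighted_cost_0: "weighted_cost x \<omega> 0 = ennreal (U x)"
  by (simp add: weighted_cost_def lip_prod_def)

lemma weighted_cost_case_nat:
  "weighted_cost x (case_nat w \<omega>) (Suc k) = lipc (f w) X x * weighted_cost (f w x) \<omega> k"
proof -
  have "lip_prod x (case_nat w \<omega>) (Suc k) = lipc (f w) X x * lip_prod (f w x) \<omega> k"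
    unfolding lip_prod_def
    by (subst prod.lessThan_Suc_shift) (simp add: chain_case_nat del: chain.simps(2))
  then show ?thesis
    unfolding weighted_cost_def by (simp only: chain_case_nat mult_ac)
qed

lemma partial_cost_case_nat:
  "(\<Sum>k<Suc n. weighted_cost x (case_nat w \<omega>) k)
     = ennreal (U x) + lipc (f w) X x * (\<Sum>k<n. weighted_cost (f w x) \<omega> k)"
  by (simp only: sum.lessThan_Suc_shift weighted_cost_0 weighted_cost_case_nat sum_distrib_left)

lemma total_cost_case_nat:
  "total_cost x (case_nat w \<omega>) = ennreal (U x) + lipc (f w) X x * total_cost (f w x) \<omega>"
proof -
  have "total_cost x (case_nat w \<omega>)
      = (\<Sum>k. weighted_cost x (case_nat w \<omega>) (k + 1)) + (\<Sum>k<1. weighted_cost x (case_nat w \<omega>) k)"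
    unfolding total_cost_def by (rule suminf_offset) simp
  then show ?thesis
    by (simp add: weighted_cost_case_nat weighted_cost_0 total_cost_def add.commute)
qed

lemma Vstar_eq_total_cost: "Vstar \<mu> f X U x = (\<integral>\<^sup>+\<omega>. total_cost x \<omega> \<partial>paths)"
proof -
  have "(\<Prod>l\<in>{1..k}. lipc (f (\<omega> (l - 1))) X (chain f \<omega> x (l - 1))) = lip_prod x \<omega> k" for \<omega> k
    unfolding lip_prod_def by (induction k) (auto simp: prod.cl_ivl_Suc lessThan_Suc mult.commute)
  then show ?thesis
    unfolding Vstar_def total_cost_def weighted_cost_def by simp
qed

lemma nn_integral_paths_first_step:
  assumes x: "x \<in> X"
    and h_meas: "h \<in> borel_measurable paths" and g_meas: "\<And>y. y \<in> X \<Longrightarrow> g y \<in> borel_measurable paths"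
    and h_case_nat: "\<And>w \<omega>. h (case_nat w \<omega>) = ennreal (U x) + lipc (f w) X x * g (f w x) \<omega>"
  shows "(\<integral>\<^sup>+\<omega>. h \<omega> \<partial>paths) = ennreal (U x) + Kop \<mu> f X (\<lambda>y. \<integral>\<^sup>+\<omega>. g y \<omega> \<partial>paths) x"
proof -
  interpret P: prob_space paths by (rule prob_space_paths)
  interpret M: prob_space \<mu> by (rule prob)
  define H where "H w = (\<integral>\<^sup>+\<omega>. h (case_nat w \<omega>) \<partial>paths)" for w
  define G where "G w = lipc (f w) X x * (\<integral>\<^sup>+\<omega>. g (f w x) \<omega> \<partial>paths)" for w
  have H_eq: "H w = ennreal (U x) + G w" for w
    unfolding H_def G_def h_case_nat using g_meas[OF maps_into[OF x]]
    by (subst nn_integral_add) (auto simp: nn_integral_cmult P.emeasure_space_1)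
  \<comment> \<open>\<open>G\<close> inherits measurability from \<open>H\<close> because \<open>U x\<close> is finite.\<close>
  have "G w = H w - ennreal (U x)" for w
    unfolding H_eq by simp
  moreover have "H \<in> borel_measurable \<mu>"
    unfolding H_def by (rule borel_measurable_nn_integral_PiM_case_nat[OF prob h_meas])
  ultimately have G_meas: "G \<in> borel_measurable \<mu>"
    by (subst measurable_cong[where g="\<lambda>w. H w - ennreal (U x)"]) auto
  have "(\<integral>\<^sup>+\<omega>. h \<omega> \<partial>paths) = (\<integral>\<^sup>+w. ennreal (U x) + G w \<partial>\<mu>)"
    unfolding H_eq[symmetric] H_def by (rule nn_integral_PiM_case_nat[OF prob h_meas])
  also have "\<dots> = ennreal (U x) + (\<integral>\<^sup>+w. G w \<partial>\<mu>)"
    using G_meas by (subst nn_integral_add) (auto simp: M.emeasure_space_1)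
  finally show ?thesis
    unfolding G_def Kop_def .
qed

lemma Vstar_fixpoint: "x \<in> X \<Longrightarrow> Vstar \<mu> f X U x = ennreal (U x) + Kop \<mu> f X (Vstar \<mu> f X U) x"
  unfolding Vstar_eq_total_cost
  by (rule nn_integral_paths_first_step) (auto simp: total_cost_case_nat)

lemma Kop_mono: "x \<in> X \<Longrightarrow> (\<And>y. y \<in> X \<Longrightarrow> V y \<le> V' y) \<Longrightarrow> Kop \<mu> f X V x \<le> Kop \<mu> f X V' x"
  unfolding Kop_def by (intro nn_integral_mono mult_left_mono) (auto simp: maps_into)

lemma Kop_add: "x \<in> X \<Longrightarrow> V \<in> borel_measurable MX \<Longrightarrow> V' \<in> borel_measurable MX \<Longrightarrow>
   Kop \<mu> f X (\<lambda>y. V y + V' y) x = Kop \<mu> f X V x + Kop \<mu> f X V' x"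
  unfolding Kop_def distrib_left by (rule nn_integral_add) (auto intro: borel_measurable_Kop_integrand)

lemma Kop_cmult: "x \<in> X \<Longrightarrow> V \<in> borel_measurable MX \<Longrightarrow>
   Kop \<mu> f X (\<lambda>y. c * V y) x = c * Kop \<mu> f X V x"
  unfolding Kop_def mult.left_commute[of _ c]
  by (rule nn_integral_cmult) (auto intro: borel_measurable_Kop_integrand)

lemma solution_le_add_Kop_abs_diff:
  assumes V_meas: "V \<in> borel_measurable MX" and V'_meas: "V' \<in> borel_measurable MX"
    and V_nonneg: "\<And>y. y \<in> X \<Longrightarrow> 0 \<le> V y" and V'_nonneg: "\<And>y. y \<in> X \<Longrightarrow> 0 \<le> V' y"
    and x: "x \<in> X"
    and V_sol: "Kop \<mu> f X (\<lambda>y. ennreal (V y)) x + ennreal (U x) = ennreal (V x)"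
    and V'_sol: "Kop \<mu> f X (\<lambda>y. ennreal (V' y)) x + ennreal (U x) = ennreal (V' x)"
  shows "ennreal (V x) \<le> ennreal (V' x) + Kop \<mu> f X (\<lambda>y. ennreal \<bar>V y - V' y\<bar>) x"
proof -
  have "ennreal (V y) \<le> ennreal (V' y) + ennreal \<bar>V y - V' y\<bar>" if "y \<in> X" for y
    using ennreal_leI[of "V y" "V' y + \<bar>V y - V' y\<bar>"] V'_nonneg[OF that] by (simp add: ennreal_plus)
  then have "Kop \<mu> f X (\<lambda>y. ennreal (V y)) x
      \<le> Kop \<mu> f X (\<lambda>y. ennreal (V' y)) x + Kop \<mu> f X (\<lambda>y. ennreal \<bar>V y - V' y\<bar>) x"
    using V_meas V'_meas by (subst Kop_add[OF x, symmetric]) (auto intro: Kop_mono[OF x])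
  from add_right_mono[OF this, of "ennreal (U x)"]
  have "Kop \<mu> f X (\<lambda>y. ennreal (V y)) x + ennreal (U x)
      \<le> Kop \<mu> f X (\<lambda>y. ennreal (V' y)) x + ennreal (U x) + Kop \<mu> f X (\<lambda>y. ennreal \<bar>V y - V' y\<bar>) x"
    by (simp add: ac_simps)
  then show ?thesis
    unfolding V_sol V'_sol .
qed

lemma abs_diff_solutions_subsolution:
  assumes V1_meas: "V1 \<in> borel_measurable MX" and V2_meas: "V2 \<in> borel_measurable MX"
    and V_nonneg: "\<And>y. y \<in> X \<Longrightarrow> 0 \<le> V1 y \<and> 0 \<le> V2 y"
    and V1_sol: "\<And>y. y \<in> X \<Longrightarrow> Kop \<mu> f X (\<lambda>y. ennreal (V1 y)) y + ennreal (U y) = ennreal (V1 y)"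
    and V2_sol: "\<And>y. y \<in> X \<Longrightarrow> Kop \<mu> f X (\<lambda>y. ennreal (V2 y)) y + ennreal (U y) = ennreal (V2 y)"
    and x: "x \<in> X"
  shows "ennreal \<bar>V1 x - V2 x\<bar> \<le> Kop \<mu> f X (\<lambda>y. ennreal \<bar>V1 y - V2 y\<bar>) x"
proof -
  have V1_le: "ennreal (V1 x) \<le> ennreal (V2 x) + Kop \<mu> f X (\<lambda>y. ennreal \<bar>V1 y - V2 y\<bar>) x"
    using solution_le_add_Kop_abs_diff[OF V1_meas V2_meas _ _ x V1_sol[OF x] V2_sol[OF x]] V_nonneg
    by blast
  have V2_le: "ennreal (V2 x) \<le> ennreal (V1 x) + Kop \<mu> f X (\<lambda>y. ennreal \<bar>V1 y - V2 y\<bar>) x"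
    using solution_le_add_Kop_abs_diff[OF V2_meas V1_meas _ _ x V2_sol[OF x] V1_sol[OF x]] V_nonneg
    by (simp only: abs_minus_commute)
  show ?thesis
  proof (cases "V2 x \<le> V1 x")
    case True
    then have "ennreal (V1 x) = ennreal (V2 x) + ennreal \<bar>V1 x - V2 x\<bar>"
      using V_nonneg[OF x] by (simp add: ennreal_plus[symmetric])
    then show ?thesis
      using V1_le by (simp add: ennreal_add_left_cancel_le)
  next
    case False
    then have "ennreal (V2 x) = ennreal (V1 x) + ennreal \<bar>V1 x - V2 x\<bar>"
      using V_nonneg[OF x] by (simp add: ennreal_plus[symmetric])
    then show ?thesis
      using V2_le by (simp add: ennreal_add_left_cancel_le)
  qed
qed

context
  fixes W :: "'a \<Rightarrow> real"
  assumes W_meas: "W \<in> borel_measurable MX"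
    and W_sol: "\<And>x. x \<in> X \<Longrightarrow> Kop \<mu> f X (\<lambda>y. ennreal (W y)) x + ennreal (U x) \<le> ennreal (W x)"
begin

lemma partial_cost_le_supersolution:
  "x \<in> X \<Longrightarrow> (\<integral>\<^sup>+\<omega>. (\<Sum>k<n. weighted_cost x \<omega> k) \<partial>paths) \<le> ennreal (W x)"
proof (induction n arbitrary: x)
  case 0
  then show ?case by simp
next
  case (Suc n)
  have "(\<integral>\<^sup>+\<omega>. (\<Sum>k<Suc n. weighted_cost x \<omega> k) \<partial>paths)
      = ennreal (U x) + Kop \<mu> f X (\<lambda>y. \<integral>\<^sup>+\<omega>. (\<Sum>k<n. weighted_cost y \<omega> k) \<partial>paths) x"
    using Suc.prems borel_measurable_partial_cost
    by (intro nn_integral_paths_first_step) (simp_all add: partial_cost_case_nat del: sum.lessThan_Suc)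
  also have "\<dots> \<le> ennreal (U x) + Kop \<mu> f X (\<lambda>y. ennreal (W y)) x"
    using Suc by (intro add_left_mono Kop_mono) auto
  also have "\<dots> \<le> ennreal (W x)"
    using W_sol[OF Suc.prems] by (simp add: add.commute)
  finally show ?case .
qed

lemma Vstar_le_supersolution: "x \<in> X \<Longrightarrow> Vstar \<mu> f X U x \<le> ennreal (W x)"
proof -
  assume x: "x \<in> X"
  have "Vstar \<mu> f X U x = (\<Sum>k. (\<integral>\<^sup>+\<omega>. weighted_cost x \<omega> k \<partial>paths))"
    unfolding Vstar_eq_total_cost total_cost_def using x by (subst nn_integral_suminf) auto
  also have "\<dots> = (SUP n. \<integral>\<^sup>+\<omega>. (\<Sum>k<n. weighted_cost x \<omega> k) \<partial>paths)"
    unfolding suminf_eq_SUP using x by (subst nn_integral_sum) auto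
  also have "\<dots> \<le> ennreal (W x)"
    using partial_cost_le_supersolution[OF x] by (rule SUP_least)
  finally show ?thesis .
qed

context
  fixes c :: real
  assumes c_pos: "0 < c" and U_ge: "\<And>x. x \<in> X \<Longrightarrow> c \<le> U x"
begin

lemma U_le_supersolution:
  assumes x: "x \<in> X"
  shows "U x \<le> W x"
proof -
  have "ennreal (U x) \<le> Kop \<mu> f X (\<lambda>y. ennreal (W y)) x + ennreal (U x)"
    by (rule add_increasing) simp_all
  also have "\<dots> \<le> ennreal (W x)"
    by (rule W_sol[OF x])
  finally show ?thesis
    using U_ge[OF x] c_pos by (simp add: ennreal_le_iff2)
qed

lemma Kop_scaled_supersolution:
  assumes x: "x \<in> X" and "0 \<le> s"
  shows "Kop \<mu> f X (\<lambda>y. ennreal (s * W y)) x \<le> ennreal (s * (W x - U x))"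
proof -
  have "Kop \<mu> f X (\<lambda>y. ennreal (W y)) x \<le> ennreal (W x) - ennreal (U x)"
    using W_sol[OF x] by (simp add: ennreal_le_minus_iff)
  also have "\<dots> = ennreal (W x - U x)"
    using U_ge[OF x] c_pos by (simp add: ennreal_minus)
  finally have "ennreal s * Kop \<mu> f X (\<lambda>y. ennreal (W y)) x \<le> ennreal s * ennreal (W x - U x)"
    by (rule mult_left_mono) simp
  moreover have "Kop \<mu> f X (\<lambda>y. ennreal (s * W y)) x = ennreal s * Kop \<mu> f X (\<lambda>y. ennreal (W y)) x"
    using Kop_cmult[OF x, of "\<lambda>y. ennreal (W y)" "ennreal s"] W_meas \<open>0 \<le> s\<close>
    by (simp add: ennreal_mult')
  ultimately show ?thesis
    using \<open>0 \<le> s\<close> by (simp add: ennreal_mult')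
qed

lemma bounded_subsolution_eq_0:
  assumes D_meas: "D \<in> borel_measurable MX" and D_nonneg: "\<And>x. x \<in> X \<Longrightarrow> 0 \<le> D x"
    and D_bounded: "\<And>x. x \<in> X \<Longrightarrow> D x \<le> B"
    and D_sub: "\<And>x. x \<in> X \<Longrightarrow> ennreal (D x) \<le> Kop \<mu> f X (\<lambda>y. ennreal (D y)) x"
    and x: "x \<in> X"
  shows "D x = 0"
proof -
  have W_ge: "c \<le> W y" if "y \<in> X" for y
    using U_ge U_le_supersolution that by (metis order.trans)
  have decay: "D y \<le> B / (c * real (Suc n)) * W y" if "y \<in> X" for n y
    using that
  proof (induction n arbitrary: y)
    case 0
    have "0 \<le> B"
      using D_nonneg[OF 0] D_bounded[OF 0] by linarith
    have "B = B / c * c" using c_pos by simp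
    also have "\<dots> \<le> B / c * W y"
      using \<open>0 \<le> B\<close> W_ge[OF 0] c_pos by (intro mult_left_mono) auto
    finally show ?case using D_bounded[OF 0] by simp
  next
    case (Suc n)
    define s where "s = B / (c * real (Suc n))"
    have "0 \<le> s"
      unfolding s_def using D_nonneg[OF Suc.prems] D_bounded[OF Suc.prems] c_pos by simp
    have "ennreal (D y) \<le> Kop \<mu> f X (\<lambda>y. ennreal (D y)) y"
      by (rule D_sub[OF Suc.prems])
    also have "\<dots> \<le> Kop \<mu> f X (\<lambda>y. ennreal (s * W y)) y"
      using Suc.IH by (intro Kop_mono[OF Suc.prems] ennreal_leI) (simp add: s_def)
    also have "\<dots> \<le> ennreal (s * (W y - U y))"
      by (rule Kop_scaled_supersolution[OF Suc.prems \<open>0 \<le> s\<close>])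
    also have "\<dots> \<le> ennreal (s * (W y - c))"
      using U_ge[OF Suc.prems] \<open>0 \<le> s\<close> by (intro ennreal_leI mult_left_mono) auto
    finally have "D y \<le> s * (W y - c)"
      using \<open>0 \<le> s\<close> W_ge[OF Suc.prems] by (subst (asm) ennreal_le_iff) auto
    then have "D y \<le> B / (c * (real (Suc n) + 1)) * W y"
      using c_pos D_bounded[OF Suc.prems] by (intro le_harmonic_step) (auto simp: s_def)
    then show ?case by simp
  qed
  have "(\<lambda>n. B * W x / c / real (Suc n)) \<longlonglongrightarrow> 0"
    by (rule LIMSEQ_Suc[OF lim_const_over_n])
  moreover have "D x \<le> B * W x / c / real (Suc n)" for n
    using decay[OF x, of n] by (simp add: field_simps)
  ultimately have "D x \<le> 0"
    by (intro LIMSEQ_le_const) auto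
  then show ?thesis
    using D_nonneg[OF x] by simp
qed

lemma bounded_solutions_eq:
  assumes V1_meas: "V1 \<in> borel_measurable MX" and V2_meas: "V2 \<in> borel_measurable MX"
    and V_nonneg: "\<And>y. y \<in> X \<Longrightarrow> 0 \<le> V1 y \<and> 0 \<le> V2 y"
    and V1_bounded: "\<And>y. y \<in> X \<Longrightarrow> V1 y \<le> B1" and V2_bounded: "\<And>y. y \<in> X \<Longrightarrow> V2 y \<le> B2"
    and V1_sol: "\<And>y. y \<in> X \<Longrightarrow> Kop \<mu> f X (\<lambda>y. ennreal (V1 y)) y + ennreal (U y) = ennreal (V1 y)"
    and V2_sol: "\<And>y. y \<in> X \<Longrightarrow> Kop \<mu> f X (\<lambda>y. ennreal (V2 y)) y + ennreal (U y) = ennreal (V2 y)"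
    and x: "x \<in> X"
  shows "V1 x = V2 x"
proof -
  have "\<bar>V1 x - V2 x\<bar> = 0"
  proof (rule bounded_subsolution_eq_0[OF _ _ _ _ x])
    show "(\<lambda>y. \<bar>V1 y - V2 y\<bar>) \<in> borel_measurable MX"
      using V1_meas V2_meas by measurable
    show "\<bar>V1 y - V2 y\<bar> \<le> max B1 B2" if "y \<in> X" for y
      using V_nonneg[OF that] V1_bounded[OF that] V2_bounded[OF that] by linarith
    show "ennreal \<bar>V1 y - V2 y\<bar> \<le> Kop \<mu> f X (\<lambda>y. ennreal \<bar>V1 y - V2 y\<bar>) y" if "y \<in> X" for y
      by (rule abs_diff_solutions_subsolution[OF V1_meas V2_meas V_nonneg V1_sol V2_sol that])
  qed simp_all
  then show ?thesis
    by simp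
qed

end

end

end

theorem theorem1:
  fixes \<mu> :: "'w measure" and f :: "'w \<Rightarrow> 'a::euclidean_space \<Rightarrow> 'a"
    and \<X> :: "'a set" and U W :: "'a \<Rightarrow> real"
  assumes prob: "prob_space \<mu>"
    and maps_into: "\<And>w x. x \<in> \<X> \<Longrightarrow> f w x \<in> \<X>"
    and f_meas: "(\<lambda>(w, x). f w x) \<in> measurable (\<mu> \<Otimes>\<^sub>M restrict_space borel \<X>) (restrict_space borel \<X>)"
    and Df_meas: "(\<lambda>(w, x). lipc (f w) \<X> x) \<in> borel_measurable (\<mu> \<Otimes>\<^sub>M restrict_space borel \<X>)"
    and loclip: "AE w in \<mu>. loc_lipschitz_on \<X> (f w)"
    and U_meas: "U \<in> borel_measurable (restrict_space borel \<X>)"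
    and U_nonneg: "\<And>x. x \<in> \<X> \<Longrightarrow> U x \<ge> 0"
    and U_inf: "(INF x\<in>\<X>. U x) > 0"
    and W_meas: "W \<in> borel_measurable (restrict_space borel \<X>)"
    and W_nonneg: "\<And>x. x \<in> \<X> \<Longrightarrow> W x \<ge> 0"
    and W_sol: "\<And>x. x \<in> \<X> \<Longrightarrow>
                  Kop \<mu> f \<X> (\<lambda>y. ennreal (W y)) x + ennreal (U x) \<le> ennreal (W x)"
  shows "(\<forall>x\<in>\<X>. Vstar \<mu> f \<X> U x < \<infinity> \<and>
            Kop \<mu> f \<X> (Vstar \<mu> f \<X> U) x + ennreal (U x) = Vstar \<mu> f \<X> U x)
       \<and> (\<forall>V1 V2. V1 \<in> borel_measurable (restrict_space borel \<X>)
            \<and> V2 \<in> borel_measurable (restrict_space borel \<X>)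
            \<and> (\<forall>x\<in>\<X>. V1 x \<ge> 0 \<and> V2 x \<ge> 0)
            \<and> (\<exists>B. \<forall>x\<in>\<X>. V1 x \<le> B) \<and> (\<exists>B. \<forall>x\<in>\<X>. V2 x \<le> B)
            \<and> (\<forall>x\<in>\<X>. Kop \<mu> f \<X> (\<lambda>y. ennreal (V1 y)) x + ennreal (U x) = ennreal (V1 x))
            \<and> (\<forall>x\<in>\<X>. Kop \<mu> f \<X> (\<lambda>y. ennreal (V2 y)) x + ennreal (U x) = ennreal (V2 x))
          \<longrightarrow> (\<forall>x\<in>\<X>. V1 x = V2 x))"
proof -
  interpret iterated_random_map \<mu> f \<X> U
    by (rule iterated_random_map.intro[OF prob maps_into f_meas Df_meas U_meas])
  have U_ge_inf: "(INF x\<in>\<X>. U x) \<le> U x" if "x \<in> \<X>" for x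
    using that U_nonneg by (intro cINF_lower bdd_belowI2[of _ 0]) auto
  show ?thesis
  proof (intro conjI ballI allI impI)
    fix x assume x: "x \<in> \<X>"
    show "Vstar \<mu> f \<X> U x < \<infinity>"
      using Vstar_le_supersolution[OF W_meas W_sol x] by (simp add: le_less_trans)
    show "Kop \<mu> f \<X> (Vstar \<mu> f \<X> U) x + ennreal (U x) = Vstar \<mu> f \<X> U x"
      using Vstar_fixpoint[OF x] by (simp add: add.commute)
  next
    fix V1 V2 x
    assume "V1 \<in> borel_measurable MX \<and> V2 \<in> borel_measurable MX \<and> (\<forall>x\<in>\<X>. 0 \<le> V1 x \<and> 0 \<le> V2 x)
      \<and> (\<exists>B. \<forall>x\<in>\<X>. V1 x \<le> B) \<and> (\<exists>B. \<forall>x\<in>\<X>. V2 x \<le> B)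
      \<and> (\<forall>x\<in>\<X>. Kop \<mu> f \<X> (\<lambda>y. ennreal (V1 y)) x + ennreal (U x) = ennreal (V1 x))
      \<and> (\<forall>x\<in>\<X>. Kop \<mu> f \<X> (\<lambda>y. ennreal (V2 y)) x + ennreal (U x) = ennreal (V2 x))"
      and "x \<in> \<X>"
    then show "V1 x = V2 x"
      using bounded_solutions_eq[OF W_meas W_sol U_inf U_ge_inf, of V1 V2] by blast
  qed
qed

end
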